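(* Let $\Gamma\in F(L)$ be homogeneous with $i$ letters $x$ and $j$ letters $y$, where $i+j$ is even and $i\le 3$. Then $\operatorname{div}(u_\Gamma)=0$.
   Context: $A=\mathbb{R}\langle x,y\rangle$; $L\subset A$ the free Lie algebra on $x,y$. $\operatorname{tr}$ is the projection $A\to A/\operatorname{span}\{ab-ba\}$. $F(L)$ is the quotient of $L\otimes L$ by the span of $a\otimes b-b\otimes a$ and $a\otimes[b,c]-[a,b]\otimes c$, regarded inside $A/\operatorname{span}\{ab-ba\}$ via $a\otimes b\mapsto\operatorname{tr}(ab)$. For $x_0\in\{x,y\}$, $\partial_{x_0}$ maps cyclic words by $\operatorname{tr}(a_1\cdots a_n)\mapsto\sum_{i:\,a_i=x_0}a_{i+1}\cdots a_n a_1\cdots a_{i-1}$. For $\Gamma\in F(L)$, $u_\Gamma$ is the derivation of $L$ with $u_\Gamma(x)=\partial_y\Gamma$, $u_\Gamma(y)=-\partial_x\Gamma$. For $l\in A$, $\partial^L_{x_0}(l)=\sum\partial^1\epsilon(\partial^2)$, where $\sum\partial^1\otimes\partial^2$ is the sum over occurrences of $x_0$ in monomials of (prefix)$\otimes$(suffix), and $\epsilon$ is the constant term. $\operatorname{div}(u)=\operatorname{tr}(\partial^L_x(u(x))+\partial^L_y(u(y)))$. *)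

theory Defs
  imports Complex_Main "HOL-Library.Function_Algebras"
begin

datatype letter = X | Y

(* Elements of A: coefficient functions on words (finite support required where relevant).
   Addition/subtraction/zero/finite sums are pointwise (Function_Algebras).
   NOTE: the pointwise '*' from Function_Algebras is NOT used; the product of A is ncmul. *)
type_synonym ncpoly = "letter list \<Rightarrow> real"

definition supp :: "ncpoly \<Rightarrow> letter list set" where
  "supp p = {w. p w \<noteq> 0}"

definition finpoly :: "ncpoly \<Rightarrow> bool" where
  "finpoly p \<longleftrightarrow> finite (supp p)"

definition mono :: "letter list \<Rightarrow> ncpoly" where
  "mono w = (\<lambda>v. if v = w then 1 else 0)"

definition scl :: "real \<Rightarrow> ncpoly \<Rightarrow> ncpoly" where
  "scl c p = (\<lambda>w. c * p w)"

definition ncmul :: "ncpoly \<Rightarrow> ncpoly \<Rightarrow> ncpoly" where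
  "ncmul p q = (\<lambda>w. \<Sum>k\<le>length w. p (take k w) * q (drop k w))"

definition eps :: "ncpoly \<Rightarrow> real" where
  "eps p = p []"

definition gen :: "letter \<Rightarrow> ncpoly" where
  "gen c = mono [c]"

inductive_set lie :: "ncpoly set" where
  lie_gen: "gen c \<in> lie"
| lie_add: "p \<in> lie \<Longrightarrow> q \<in> lie \<Longrightarrow> p + q \<in> lie"
| lie_scl: "p \<in> lie \<Longrightarrow> scl c p \<in> lie"
| lie_br: "p \<in> lie \<Longrightarrow> q \<in> lie \<Longrightarrow> ncmul p q - ncmul q p \<in> lie"

inductive_set comspan :: "ncpoly set" where
  cs_zero: "0 \<in> comspan"
| cs_comm: "finpoly a \<Longrightarrow> finpoly b \<Longrightarrow> ncmul a b - ncmul b a \<in> comspan"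
| cs_add: "p \<in> comspan \<Longrightarrow> q \<in> comspan \<Longrightarrow> p + q \<in> comspan"
| cs_scl: "p \<in> comspan \<Longrightarrow> scl c p \<in> comspan"

(* tr : A -> A/span{ab-ba}; the class of p *)
definition tr :: "ncpoly \<Rightarrow> ncpoly set" where
  "tr p = {q. finpoly q \<and> p - q \<in> comspan}"

(* F(L), regarded inside A/span{ab-ba} via a \<otimes> b \<mapsto> tr(ab) *)
definition FL :: "ncpoly set set" where
  "FL = {tr (\<Sum>k<n. ncmul (a k) (b k)) | (n::nat) (a::nat \<Rightarrow> ncpoly) (b::nat \<Rightarrow> ncpoly). \<forall>k<n. a k \<in> lie \<and> b k \<in> lie}"

definition homog :: "ncpoly \<Rightarrow> nat \<Rightarrow> nat \<Rightarrow> bool" where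
  "homog p i j \<longleftrightarrow> (\<forall>w. p w \<noteq> 0 \<longrightarrow> count_list w X = i \<and> count_list w Y = j)"

(* cyclic derivative on a cyclic word tr(a_1...a_n) given by the word v = a_1...a_n:
   sum over i with a_i = x0 of a_{i+1}...a_n a_1...a_{i-1} *)
definition cycdw :: "letter \<Rightarrow> letter list \<Rightarrow> ncpoly" where
  "cycdw c v = (\<Sum>i<length v. if v ! i = c then mono (drop (Suc i) v @ take i v) else 0)"

(* extended linearly; applied to a representative g of Gamma = tr g *)
definition cycd :: "letter \<Rightarrow> ncpoly \<Rightarrow> ncpoly" where
  "cycd c g = (\<Sum>v\<in>supp g. scl (g v) (cycdw c v))"

(* derivation of A determined by its values f on the generators *)
definition derw :: "(letter \<Rightarrow> ncpoly) \<Rightarrow> letter list \<Rightarrow> ncpoly" where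
  "derw f v = (\<Sum>i<length v. ncmul (ncmul (mono (take i v)) (f (v ! i))) (mono (drop (Suc i) v)))"

definition der :: "(letter \<Rightarrow> ncpoly) \<Rightarrow> ncpoly \<Rightarrow> ncpoly" where
  "der f p = (\<Sum>v\<in>supp p. scl (p v) (derw f v))"

definition uGamma :: "ncpoly \<Rightarrow> ncpoly \<Rightarrow> ncpoly" where
  "uGamma g = der (\<lambda>c. if c = X then cycd Y g else - cycd X g)"

definition dLw :: "letter \<Rightarrow> letter list \<Rightarrow> ncpoly" where
  "dLw c v = (\<Sum>i<length v. if v ! i = c then scl (eps (mono (drop (Suc i) v))) (mono (take i v)) else 0)"

definition dL :: "letter \<Rightarrow> ncpoly \<Rightarrow> ncpoly" where
  "dL c p = (\<Sum>v\<in>supp p. scl (p v) (dLw c v))"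

definition divergence :: "(ncpoly \<Rightarrow> ncpoly) \<Rightarrow> ncpoly set" where
  "divergence u = tr (dL X (u (gen X)) + dL Y (u (gen Y)))"

end

(*
  Everything is linear, so div(u_Gamma) = tr (E g), where E extends linearly a map divw on
  words satisfying divw (u v) = divw (v u); hence E vanishes on the span of commutators.
  The antipode S (the anti-automorphism of A with S x = -x, S y = -y) is -1 on L, so it fixes
  every element of F(L) modulo commutators; in even degree S is plain reversal R, giving
  R g = g modulo commutators. Since divw (rev v) = - R (divw v), the polynomial h = E g
  satisfies R h = -h. Every word of h has i - 1 <= 2 letters x, and such a word is a rotation
  of its reversal, so h = R h = -h modulo commutators: h is a sum of commutators and
  div(u_Gamma) = tr 0.
*)
theory Submission
  imports Defs
begin

lemma sum_fun_apply: "sum f A x = (\<Sum>a\<in>A. f a x)"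
  by (induction A rule: infinite_finite_induct) auto

lemma scl_apply [simp]: "scl c p w = c * p w"
  by (simp add: scl_def)

lemma scl_zero [simp]: "scl c 0 = 0"
  by (simp add: scl_def fun_eq_iff)

lemma scl_sum: "scl c (sum f A) = (\<Sum>a\<in>A. scl c (f a))"
  by (simp add: fun_eq_iff sum_fun_apply sum_distrib_left)

lemma supp_add: "supp (p + q) \<subseteq> supp p \<union> supp q"
  by (auto simp: supp_def)

lemma supp_diff: "supp (p - q) \<subseteq> supp p \<union> supp q"
  by (auto simp: supp_def)

lemma supp_uminus [simp]: "supp (- p) = supp p"
  by (auto simp: supp_def)

lemma supp_scl: "supp (scl c p) \<subseteq> supp p"
  by (auto simp: supp_def)

lemma supp_mono [simp]: "supp (mono u) = {u}"
  by (auto simp: supp_def mono_def)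

lemma supp_zero [simp]: "supp 0 = {}"
  by (auto simp: supp_def)

lemma supp_sum: "supp (sum f A) \<subseteq> (\<Union>a\<in>A. supp (f a))"
  by (auto simp: supp_def sum_fun_apply intro: ccontr elim: sum.not_neutral_contains_not_neutral)

lemma finpoly_add: "finpoly p \<Longrightarrow> finpoly q \<Longrightarrow> finpoly (p + q)"
  unfolding finpoly_def by (meson finite_UnI finite_subset supp_add)

lemma finpoly_diff: "finpoly p \<Longrightarrow> finpoly q \<Longrightarrow> finpoly (p - q)"
  unfolding finpoly_def by (meson finite_UnI finite_subset supp_diff)

lemma finpoly_scl: "finpoly p \<Longrightarrow> finpoly (scl c p)"
  unfolding finpoly_def by (meson finite_subset supp_scl)

lemma finpoly_mono: "finpoly (mono u)"
  by (simp add: finpoly_def)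

lemma finpoly_zero: "finpoly 0"
  by (simp add: finpoly_def)

lemma finpoly_sum: "(\<And>a. a \<in> A \<Longrightarrow> finpoly (f a)) \<Longrightarrow> finpoly (sum f A)"
  by (induction A rule: infinite_finite_induct) (auto simp: finpoly_zero finpoly_add)

definition linext :: "(letter list \<Rightarrow> ncpoly) \<Rightarrow> ncpoly \<Rightarrow> ncpoly" where
  "linext F p = (\<Sum>v\<in>supp p. scl (p v) (F v))"

lemma dL_eq_linext: "dL c = linext (dLw c)"
  by (simp add: fun_eq_iff dL_def linext_def)

lemma cycd_eq_linext: "cycd c = linext (cycdw c)"
  by (simp add: fun_eq_iff cycd_def linext_def)

lemma der_eq_linext: "der f = linext (derw f)"
  by (simp add: fun_eq_iff der_def linext_def)

lemma linext_apply:
  assumes "finite A" "supp p \<subseteq> A"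
  shows "linext F p w = (\<Sum>v\<in>A. p v * F v w)"
proof -
  have "linext F p = (\<Sum>v\<in>A. scl (p v) (F v))"
    unfolding linext_def
    by (rule sum.mono_neutral_left[OF assms]) (auto simp: supp_def scl_def)
  then show ?thesis
    by (simp add: sum_fun_apply)
qed

lemma linext_add:
  assumes "finpoly p" "finpoly q"
  shows "linext F (p + q) = linext F p + linext F q"
proof
  fix w
  have A: "finite (supp p \<union> supp q)"
    using assms by (simp add: finpoly_def)
  show "linext F (p + q) w = (linext F p + linext F q) w"
    using linext_apply[OF A supp_add] linext_apply[OF A, of p] linext_apply[OF A, of q]
    by (simp add: sum.distrib distrib_right)
qed

lemma linext_scl:
  assumes "finpoly p"
  shows "linext F (scl c p) = scl c (linext F p)"
proof
  fix w
  have A: "finite (supp p)"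
    using assms by (simp add: finpoly_def)
  show "linext F (scl c p) w = scl c (linext F p) w"
    using linext_apply[OF A supp_scl] linext_apply[OF A, of p]
    by (simp add: sum_distrib_left mult.assoc)
qed

lemma linext_uminus: "linext F (- p) = - linext F p"
  by (simp add: fun_eq_iff linext_def sum_fun_apply sum_negf)

lemma linext_diff:
  assumes "finpoly p" "finpoly q"
  shows "linext F (p - q) = linext F p - linext F q"
  using linext_add[of p "- q" F] assms
  by (simp add: finpoly_def linext_uminus)

lemma linext_zero [simp]: "linext F 0 = 0"
  by (simp add: linext_def)

lemma linext_mono [simp]: "linext F (mono u) = F u"
  by (simp add: linext_def) (simp add: mono_def scl_def)

lemma linext_sum:
  assumes "\<And>a. a \<in> A \<Longrightarrow> finpoly (f a)"
  shows "linext F (sum f A) = (\<Sum>a\<in>A. linext F (f a))"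
  using assms
proof (induction A rule: infinite_finite_induct)
  case (insert a A)
  have "linext F (f a + sum f A) = linext F (f a) + linext F (sum f A)"
    using insert.prems by (intro linext_add finpoly_sum) auto
  moreover have "linext F (sum f A) = (\<Sum>a\<in>A. linext F (f a))"
    using insert by simp
  ultimately show ?case
    unfolding sum.insert[OF insert(1,2)] by (simp only:)
qed simp_all

lemma finpoly_linext:
  assumes "finpoly p" "\<And>v. finpoly (F v)"
  shows "finpoly (linext F p)"
  unfolding linext_def by (intro finpoly_sum finpoly_scl assms)

lemma linext_linext:
  assumes "finpoly p" "\<And>v. finpoly (F v)"
  shows "linext G (linext F p) = linext (\<lambda>v. linext G (F v)) p"
  unfolding linext_def[of F p] linext_def[of "\<lambda>v. linext G (F v)" p]
  using assms by (simp add: linext_sum finpoly_scl linext_scl)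

lemma linext_mono_self:
  assumes "finpoly p"
  shows "linext mono p = p"
proof
  fix w
  have A: "finite (supp p)"
    using assms by (simp add: finpoly_def)
  have "linext mono p w = (\<Sum>v\<in>supp p. if v = w then p v else 0)"
    unfolding linext_apply[OF A order_refl] by (rule sum.cong) (auto simp: mono_def)
  also have "\<dots> = p w"
    using A by (simp add: supp_def)
  finally show "linext mono p w = p w" .
qed

lemma linext_fun_diff: "linext (\<lambda>v. F v - G v) p = linext F p - linext G p"
  by (simp add: fun_eq_iff linext_def sum_fun_apply sum_subtractf right_diff_distrib)

lemma linext_fun_uminus: "linext (\<lambda>v. - F v) p = - linext F p"
  by (simp add: fun_eq_iff linext_def sum_fun_apply sum_negf)

lemma supp_linext: "supp (linext F p) \<subseteq> (\<Union>v\<in>supp p. supp (F v))"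
  unfolding linext_def using supp_sum supp_scl by fastforce

lemma ncmul_mono: "ncmul (mono u) (mono v) = mono (u @ v)"
proof
  fix w
  have "mono u (take k w) * mono v (drop k w) = (if k = length u \<and> w = u @ v then 1 else 0)"
    if "k \<le> length w" for k
    using that by (auto simp: mono_def append_eq_conv_conj min_absorb2)
  then have "ncmul (mono u) (mono v) w
      = (\<Sum>k\<le>length w. if k = length u \<and> w = u @ v then 1 else 0)"
    unfolding ncmul_def by (intro sum.cong) auto
  also have "\<dots> = mono (u @ v) w"
    by (auto simp: mono_def)
  finally show "ncmul (mono u) (mono v) w = mono (u @ v) w" .
qed

lemma ncmul_one_left: "ncmul (mono []) p = p"
proof
  fix w
  have "ncmul (mono []) p w = (\<Sum>k\<le>length w. if k = 0 then p w else 0)"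
    unfolding ncmul_def by (intro sum.cong) (auto simp: mono_def)
  then show "ncmul (mono []) p w = p w"
    by simp
qed

lemma ncmul_one_right: "ncmul p (mono []) = p"
proof
  fix w
  have "ncmul p (mono []) w = (\<Sum>k\<le>length w. if k = length w then p w else 0)"
    unfolding ncmul_def by (intro sum.cong) (auto simp: mono_def)
  then show "ncmul p (mono []) w = p w"
    by simp
qed

lemma ncmul_sum_left: "ncmul (sum f A) q = (\<Sum>a\<in>A. ncmul (f a) q)"
  by (simp add: fun_eq_iff ncmul_def sum_fun_apply sum_distrib_right sum.swap[of _ A])

lemma ncmul_sum_right: "ncmul p (sum f A) = (\<Sum>a\<in>A. ncmul p (f a))"
  by (simp add: fun_eq_iff ncmul_def sum_fun_apply sum_distrib_left sum.swap[of _ A])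

lemma ncmul_scl_left: "ncmul (scl c p) q = scl c (ncmul p q)"
  by (simp add: fun_eq_iff ncmul_def sum_distrib_left mult.assoc)

lemma ncmul_scl_right: "ncmul p (scl c q) = scl c (ncmul p q)"
  by (simp add: fun_eq_iff ncmul_def sum_distrib_left mult.left_commute)

lemma ncmul_uminus_uminus: "ncmul (- p) (- q) = ncmul p q"
  by (simp add: fun_eq_iff ncmul_def)

lemma ncmul_eq_sum_mono:
  assumes "finpoly p" "finpoly q"
  shows "ncmul p q = (\<Sum>u\<in>supp p. \<Sum>v\<in>supp q. scl (p u * q v) (mono (u @ v)))"
proof -
  have "ncmul p q = ncmul (linext mono p) (linext mono q)"
    using assms by (simp add: linext_mono_self)
  also have "\<dots> = (\<Sum>v\<in>supp q. \<Sum>u\<in>supp p. scl (q v) (scl (p u) (ncmul (mono u) (mono v))))"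
    unfolding linext_def ncmul_sum_left ncmul_sum_right ncmul_scl_left ncmul_scl_right scl_sum ..
  also have "\<dots> = (\<Sum>u\<in>supp p. \<Sum>v\<in>supp q. scl (p u * q v) (mono (u @ v)))"
    by (subst sum.swap) (simp add: ncmul_mono scl_def mult_ac)
  finally show ?thesis .
qed

lemma finpoly_ncmul: "finpoly p \<Longrightarrow> finpoly q \<Longrightarrow> finpoly (ncmul p q)"
  by (simp add: ncmul_eq_sum_mono finpoly_sum finpoly_scl finpoly_mono)

lemma linext_ncmul:
  assumes "finpoly p" "finpoly q"
  shows "linext F (ncmul p q) = (\<Sum>u\<in>supp p. \<Sum>v\<in>supp q. scl (p u * q v) (F (u @ v)))"
  unfolding ncmul_eq_sum_mono[OF assms]
  by (simp add: linext_sum linext_scl finpoly_sum finpoly_scl finpoly_mono)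

lemma finpoly_comspan: "p \<in> comspan \<Longrightarrow> finpoly p"
  by (induction rule: comspan.induct)
    (intro finpoly_zero finpoly_diff finpoly_ncmul finpoly_add finpoly_scl; assumption)+

lemma comspan_uminus:
  assumes "p \<in> comspan"
  shows "- p \<in> comspan"
proof -
  have "scl (-1) p = - p"
    by (simp add: fun_eq_iff)
  then show ?thesis
    using cs_scl[OF assms, of "-1"] by simp
qed

lemma comspan_diff: "p \<in> comspan \<Longrightarrow> q \<in> comspan \<Longrightarrow> p - q \<in> comspan"
  using cs_add[OF _ comspan_uminus, of p q] by simp

lemma comspan_sum: "(\<And>a. a \<in> A \<Longrightarrow> f a \<in> comspan) \<Longrightarrow> sum f A \<in> comspan"
  by (induction A rule: infinite_finite_induct) (auto intro: cs_zero cs_add)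

lemma comspan_mono_swap: "mono (u @ v) - mono (v @ u) \<in> comspan"
  using cs_comm[OF finpoly_mono finpoly_mono, of u v] by (simp add: ncmul_mono)

lemma tr_comspan:
  assumes "p \<in> comspan"
  shows "tr p = tr 0"
proof -
  have "p - q \<in> comspan \<longleftrightarrow> - q \<in> comspan" for q
    using comspan_diff[OF _ assms, of "p - q"] cs_add[OF assms, of "- q"] by auto
  then show ?thesis
    unfolding tr_def by simp
qed

section \<open>Reversal and the antipode\<close>

definition rev_poly :: "ncpoly \<Rightarrow> ncpoly" where
  "rev_poly p = (\<lambda>w. p (rev w))"

definition antipode :: "ncpoly \<Rightarrow> ncpoly" where
  "antipode p = (\<lambda>w. (-1) ^ length w * p (rev w))"

lemma rev_poly_sum: "rev_poly (sum f A) = (\<Sum>a\<in>A. rev_poly (f a))"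
  by (simp add: fun_eq_iff rev_poly_def sum_fun_apply)

lemma rev_poly_scl: "rev_poly (scl c p) = scl c (rev_poly p)"
  by (simp add: fun_eq_iff rev_poly_def)

lemma rev_poly_mono: "rev_poly (mono u) = mono (rev u)"
  by (auto simp: fun_eq_iff rev_poly_def mono_def)

lemma rev_poly_zero [simp]: "rev_poly 0 = 0"
  by (simp add: fun_eq_iff rev_poly_def)

lemma rev_poly_diff: "rev_poly (p - q) = rev_poly p - rev_poly q"
  by (simp add: fun_eq_iff rev_poly_def)

lemma rev_poly_linext: "rev_poly (linext F p) = linext (\<lambda>v. rev_poly (F v)) p"
  unfolding linext_def rev_poly_sum rev_poly_scl ..

lemma rev_poly_eq_linext: "finpoly p \<Longrightarrow> rev_poly p = linext (\<lambda>v. mono (rev v)) p"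
  using rev_poly_linext[of mono p] by (simp add: linext_mono_self rev_poly_mono)

lemma finpoly_rev_poly: "finpoly p \<Longrightarrow> finpoly (rev_poly p)"
  by (simp add: rev_poly_eq_linext finpoly_linext finpoly_mono)

lemma antipode_ncmul: "antipode (ncmul p q) = ncmul (antipode q) (antipode p)"
proof
  fix w :: "letter list"
  let ?n = "length w"
  have "antipode (ncmul p q) w
      = (-1) ^ ?n * (\<Sum>k<Suc ?n. p (take k (rev w)) * q (drop k (rev w)))"
    by (simp add: antipode_def ncmul_def lessThan_Suc_atMost)
  also have "\<dots> = (-1) ^ ?n * (\<Sum>k<Suc ?n. p (take (?n - k) (rev w)) * q (drop (?n - k) (rev w)))"
    by (subst sum.nat_diff_reindex[symmetric]) simp
  also have "\<dots> = (\<Sum>k<Suc ?n. ((-1) ^ k * q (rev (take k w)))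
                     * ((-1) ^ length (drop k w) * p (rev (drop k w))))"
    unfolding sum_distrib_left
  proof (rule sum.cong[OF refl])
    fix k
    assume "k \<in> {..<Suc ?n}"
    then have k: "k \<le> ?n"
      by simp
    then have "(-1::real) ^ ?n = (-1) ^ k * (-1) ^ length (drop k w)"
      by (simp flip: power_add)
    moreover have "take (?n - k) (rev w) = rev (drop k w)" "drop (?n - k) (rev w) = rev (take k w)"
      using k by (simp_all add: take_rev drop_rev)
    ultimately show "(-1) ^ ?n * (p (take (?n - k) (rev w)) * q (drop (?n - k) (rev w)))
        = ((-1) ^ k * q (rev (take k w))) * ((-1) ^ length (drop k w) * p (rev (drop k w)))"
      by (simp add: mult_ac)
  qed
  also have "\<dots> = ncmul (antipode q) (antipode p) w"
    by (simp add: antipode_def ncmul_def lessThan_Suc_atMost min_absorb2)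
  finally show "antipode (ncmul p q) w = ncmul (antipode q) (antipode p) w" .
qed

lemma antipode_add: "antipode (p + q) = antipode p + antipode q"
  by (simp add: fun_eq_iff antipode_def algebra_simps)

lemma antipode_diff: "antipode (p - q) = antipode p - antipode q"
  by (simp add: fun_eq_iff antipode_def algebra_simps)

lemma antipode_scl: "antipode (scl c p) = scl c (antipode p)"
  by (simp add: fun_eq_iff antipode_def algebra_simps)

lemma antipode_zero: "antipode 0 = 0"
  by (simp add: fun_eq_iff antipode_def)

lemma antipode_sum: "antipode (sum f A) = (\<Sum>a\<in>A. antipode (f a))"
  by (simp add: fun_eq_iff antipode_def sum_fun_apply sum_distrib_left)

lemma antipode_eq_rev_poly_if_even:
  assumes "\<And>w. p w \<noteq> 0 \<Longrightarrow> even (length w)"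
  shows "antipode p = rev_poly p"
  using assms by (fastforce simp: fun_eq_iff antipode_def rev_poly_def)

lemma finpoly_antipode: "finpoly p \<Longrightarrow> finpoly (antipode p)"
proof -
  assume "finpoly p"
  moreover have "supp (antipode p) \<subseteq> rev ` supp p"
    by (auto simp: supp_def antipode_def intro!: image_eqI[where x = "rev _"])
  ultimately show ?thesis
    unfolding finpoly_def by (meson finite_imageI finite_subset)
qed

lemma antipode_gen: "antipode (gen c) = - gen c"
  by (auto simp: fun_eq_iff antipode_def gen_def mono_def)

lemma antipode_lie: "a \<in> lie \<Longrightarrow> antipode a = - a"
proof (induction rule: lie.induct)
  case (lie_br p q)
  then show ?case
    by (simp only: antipode_diff antipode_ncmul ncmul_uminus_uminus minus_diff_eq)
qed (simp_all only: antipode_gen antipode_add antipode_scl minus_add_distrib,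
  simp add: fun_eq_iff)

lemma finpoly_lie: "a \<in> lie \<Longrightarrow> finpoly a"
  by (induction rule: lie.induct)
    (simp_all only: gen_def finpoly_mono finpoly_add finpoly_scl finpoly_diff finpoly_ncmul)

lemma comspan_antipode: "p \<in> comspan \<Longrightarrow> antipode p \<in> comspan"
proof (induction rule: comspan.induct)
  case (cs_comm a b)
  have "ncmul (antipode b) (antipode a) - ncmul (antipode a) (antipode b) \<in> comspan"
    by (intro comspan.cs_comm finpoly_antipode cs_comm)
  then show ?case
    by (simp only: antipode_diff antipode_ncmul)
qed (simp_all only: antipode_zero antipode_add antipode_scl comspan.intros)

lemma antipode_minus_self_comspan_FL:
  assumes "finpoly g" "tr g \<in> FL"
  shows "antipode g - g \<in> comspan"
proof -
  obtain n :: nat and a b where tr_g: "tr g = tr (\<Sum>k<n. ncmul (a k) (b k))"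
    and lie: "\<forall>k<n. a k \<in> lie \<and> b k \<in> lie"
    using assms(2) unfolding FL_def by blast
  let ?P = "\<Sum>k<n. ncmul (a k) (b k)"
  let ?Q = "\<Sum>k<n. ncmul (b k) (a k)"
  have "g \<in> tr g"
    using assms(1) cs_zero by (simp add: tr_def)
  then have "g \<in> tr ?P"
    by (simp only: tr_g)
  then have P_g: "?P - g \<in> comspan"
    unfolding tr_def by blast
  have "antipode ?P = ?Q"
    unfolding antipode_sum using lie
    by (intro sum.cong) (simp_all add: antipode_ncmul antipode_lie ncmul_uminus_uminus)
  then have Q_antipode_g: "?Q - antipode g \<in> comspan"
    using comspan_antipode[OF P_g] by (simp only: antipode_diff)
  have "(\<Sum>k<n. ncmul (a k) (b k) - ncmul (b k) (a k)) \<in> comspan"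
    using lie by (intro comspan_sum cs_comm finpoly_lie) auto
  then have P_Q: "?P - ?Q \<in> comspan"
    by (simp only: sum_subtractf)
  have "(?P - g) - (?P - ?Q) - (?Q - antipode g) \<in> comspan"
    by (intro comspan_diff P_g P_Q Q_antipode_g)
  moreover have "(?P - g) - (?P - ?Q) - (?Q - antipode g) = antipode g - g"
    by (simp add: algebra_simps)
  ultimately show ?thesis
    by simp
qed

lemma dLw_eq: "dLw c v = (if v \<noteq> [] \<and> last v = c then mono (butlast v) else 0)"
proof (cases v rule: rev_cases)
  case (snoc u a)
  have "dLw c (u @ [a]) = (\<Sum>i<Suc (length u). if i = length u \<and> a = c then mono u else 0)"
    unfolding dLw_def
    by (intro sum.cong) (auto simp: eps_def mono_def nth_append fun_eq_iff)
  then show ?thesis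
    using snoc by simp
qed (simp add: dLw_def)

definition strip_first :: "letter \<Rightarrow> letter list \<Rightarrow> ncpoly" where
  "strip_first c v = (if v \<noteq> [] \<and> hd v = c then mono (tl v) else 0)"

lemma finpoly_dLw: "finpoly (dLw c v)"
  by (simp add: dLw_eq finpoly_mono finpoly_zero)

lemma supp_dLw: "w \<in> supp (dLw c v) \<Longrightarrow> v = w @ [c]"
  by (auto simp: dLw_eq split: if_splits)

lemma dLw_rev: "dLw c (rev v) = rev_poly (strip_first c v)"
  by (simp add: dLw_eq strip_first_def last_rev butlast_rev rev_poly_mono)

lemma linext_strip_first_dLw:
  "linext (strip_first b) (dLw a t) = linext (dLw a) (dLw b (rotate1 t))"
proof (cases t)
  case (Cons h r)
  then show ?thesis
    by (cases "r = []") (auto simp: dLw_eq strip_first_def)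
qed (simp add: dLw_eq)

lemma sum_lessThan_shift_periodic:
  fixes f :: "nat \<Rightarrow> 'a::cancel_comm_monoid_add"
  assumes "f n = f 0"
  shows "(\<Sum>i<n. f (Suc i)) = (\<Sum>i<n. f i)"
  using sum.lessThan_Suc_shift[of f n] sum.lessThan_Suc[of f n] assms
  by (simp add: add.commute)

lemma sum_rotate_add:
  fixes f :: "'a list \<Rightarrow> 'b::cancel_comm_monoid_add"
  shows "(\<Sum>i<length v. f (rotate (i + k) v)) = (\<Sum>i<length v. f (rotate i v))"
proof (induction k)
  case (Suc k)
  have period: "rotate (length v + k) v = rotate k v"
    by (metis mod_add_self1 rotate_conv_mod)
  have "(\<Sum>i<length v. f (rotate (Suc i + k) v)) = (\<Sum>i<length v. f (rotate (i + k) v))"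
    by (rule sum_lessThan_shift_periodic[where f = "\<lambda>i. f (rotate (i + k) v)"])
      (simp add: period)
  with Suc show ?case
    by (simp del: rotate_Suc)
qed simp

lemma rotate_Suc_nth:
  assumes "i < length v"
  shows "rotate (Suc i) v = drop (Suc i) v @ take i v @ [v ! i]"
proof (cases "Suc i = length v")
  case True
  then show ?thesis
    using take_Suc_conv_app_nth[OF assms] by (simp del: rotate_Suc)
next
  case False
  then show ?thesis
    using assms by (simp add: rotate_drop_take take_Suc_conv_app_nth del: rotate_Suc)
qed

lemma cycdw_eq_sum_rotate: "cycdw c v = (\<Sum>i<length v. dLw c (rotate i v))"
proof -
  have "cycdw c v = (\<Sum>i<length v. dLw c (rotate (i + 1) v))"
    unfolding cycdw_def
    by (intro sum.cong) (simp_all add: rotate_Suc_nth dLw_eq butlast_append del: rotate_Suc)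
  then show ?thesis
    by (simp only: sum_rotate_add)
qed

lemma finpoly_cycdw: "finpoly (cycdw c v)"
  unfolding cycdw_eq_sum_rotate by (intro finpoly_sum finpoly_dLw)

lemma supp_cycdw: "w \<in> supp (cycdw c v) \<Longrightarrow> \<exists>i. rotate i v = w @ [c]"
  unfolding cycdw_eq_sum_rotate using supp_sum supp_dLw by blast

lemma cycdw_rotate: "cycdw c (rotate m v) = cycdw c v"
  unfolding cycdw_eq_sum_rotate using sum_rotate_add[where f = "dLw c" and v = v and k = m]
  by (simp add: rotate_rotate del: rotate_Suc)

lemma cycdw_append_swap: "cycdw c (u @ v) = cycdw c (v @ u)"
  by (metis cycdw_rotate rotate_append)

lemma cycdw_rev: "cycdw c (rev v) = rev_poly (cycdw c v)"
proof -
  let ?n = "length v"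
  have "cycdw c (rev v) = (\<Sum>i<?n. if rev v ! (?n - Suc i) = c
      then mono (drop (Suc (?n - Suc i)) (rev v) @ take (?n - Suc i) (rev v)) else 0)"
    unfolding cycdw_def length_rev by (rule sum.nat_diff_reindex[symmetric])
  also have "\<dots> = (\<Sum>i<?n. rev_poly (if v ! i = c then mono (drop (Suc i) v @ take i v) else 0))"
    by (intro sum.cong) (simp_all add: rev_nth drop_rev take_rev rev_poly_mono)
  also have "\<dots> = rev_poly (cycdw c v)"
    unfolding cycdw_def rev_poly_sum ..
  finally show ?thesis .
qed

(* Both sides sum, over the cyclic occurrences of the factor a b in v, the rest of the cycle. *)
lemma linext_strip_first_cycdw:
  "linext (strip_first b) (cycdw a v) = linext (dLw a) (cycdw b v)"
proof -
  have "linext (strip_first b) (cycdw a v)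
      = (\<Sum>i<length v. linext (dLw a) (dLw b (rotate (i + 1) v)))"
    unfolding cycdw_eq_sum_rotate
    by (simp add: linext_sum finpoly_dLw linext_strip_first_dLw)
  also have "\<dots> = linext (dLw a) (cycdw b v)"
    using sum_rotate_add[where f = "\<lambda>t. linext (dLw a) (dLw b t)" and k = 1]
    by (simp add: cycdw_eq_sum_rotate linext_sum finpoly_dLw)
  finally show ?thesis .
qed

section \<open>The divergence of a cyclic word\<close>

definition divw :: "letter list \<Rightarrow> ncpoly" where
  "divw v = dL X (cycdw Y v) - dL Y (cycdw X v)"

lemma der_gen: "der f (gen c) = f c"
  by (simp add: der_eq_linext gen_def derw_def ncmul_one_left ncmul_one_right)

lemma divergence_uGamma:
  assumes "finpoly g"
  shows "divergence (uGamma g) = tr (linext divw g)"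
proof -
  have "uGamma g (gen X) = cycd Y g" "uGamma g (gen Y) = - cycd X g"
    by (simp_all only: uGamma_def der_gen letter.distinct simp_thms if_True if_False)
  then have "dL X (uGamma g (gen X)) + dL Y (uGamma g (gen Y))
      = linext (dLw X) (linext (cycdw Y) g) - linext (dLw Y) (linext (cycdw X) g)"
    by (simp only: dL_eq_linext cycd_eq_linext linext_uminus diff_conv_add_uminus)
  also have "\<dots> = linext divw g"
    using assms unfolding divw_def[abs_def] dL_eq_linext
    by (simp add: linext_linext finpoly_cycdw flip: linext_fun_diff)
  finally show ?thesis
    unfolding divergence_def by simp
qed

lemma finpoly_divw: "finpoly (divw v)"
  unfolding divw_def dL_eq_linext
  by (intro finpoly_diff finpoly_linext finpoly_cycdw finpoly_dLw)

lemma divw_append_swap: "divw (u @ v) = divw (v @ u)"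
  unfolding divw_def by (simp add: cycdw_append_swap[of _ u v])

lemma divw_rev: "divw (rev v) = - rev_poly (divw v)"
proof -
  have "dL c (cycdw d (rev v)) = rev_poly (linext (strip_first c) (cycdw d v))" for c d
    by (simp add: dL_eq_linext cycdw_rev rev_poly_eq_linext finpoly_cycdw linext_linext
        finpoly_mono dLw_rev flip: rev_poly_linext)
  then show ?thesis
    by (simp add: divw_def linext_strip_first_cycdw dL_eq_linext rev_poly_diff)
qed

lemma linext_comspan:
  assumes "\<And>u v. F (u @ v) = F (v @ u)" "p \<in> comspan"
  shows "linext F p = 0"
  using assms(2)
proof (induction rule: comspan.induct)
  case (cs_comm a b)
  have "linext F (ncmul b a) = (\<Sum>v\<in>supp b. \<Sum>u\<in>supp a. scl (b v * a u) (F (v @ u)))"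
    using cs_comm by (intro linext_ncmul)
  also have "\<dots> = (\<Sum>u\<in>supp a. \<Sum>v\<in>supp b. scl (a u * b v) (F (u @ v)))"
    by (subst sum.swap) (simp only: assms(1) mult.commute)
  also have "\<dots> = linext F (ncmul a b)"
    using cs_comm by (intro linext_ncmul[symmetric])
  moreover have "linext F (ncmul a b - ncmul b a) = linext F (ncmul a b) - linext F (ncmul b a)"
    using cs_comm by (intro linext_diff finpoly_ncmul)
  ultimately show ?case
    by (simp only: diff_self)
next
  case (cs_add p q)
  then show ?case
    by (simp only: linext_add finpoly_comspan add_0)
next
  case (cs_scl p c)
  then show ?case
    by (simp only: linext_scl finpoly_comspan scl_zero)
qed (simp only: linext_zero)

lemma linext_rev_poly:
  assumes "finpoly p"
  shows "linext F (rev_poly p) = linext (\<lambda>v. F (rev v)) p"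
  using assms by (simp add: rev_poly_eq_linext linext_linext finpoly_mono)

lemma count_list_rotate: "count_list (rotate n xs) a = count_list xs a"
proof (induction n)
  case (Suc n)
  then show ?case
    by (cases "rotate n xs") auto
qed simp

lemma supp_dL_cycdw:
  assumes "w \<in> supp (dL c (cycdw d v))"
  shows "\<exists>i. rotate i v = w @ [c, d]"
proof -
  obtain u where "u \<in> supp (cycdw d v)" "w \<in> supp (dLw c u)"
    using assms supp_linext unfolding dL_eq_linext by blast
  then show ?thesis
    using supp_cycdw supp_dLw by fastforce
qed

lemma count_supp_divw:
  assumes "w \<in> supp (divw v)"
  shows "Suc (count_list w X) = count_list v X"
proof -
  have "w \<in> supp (dL X (cycdw Y v)) \<or> w \<in> supp (dL Y (cycdw X v))"
    using assms supp_diff unfolding divw_def by blast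
  then obtain i where "rotate i v = w @ [X, Y] \<or> rotate i v = w @ [Y, X]"
    using supp_dL_cycdw by blast
  then have "count_list (rotate i v) X = Suc (count_list w X)"
    by auto
  then show ?thesis
    by (simp add: count_list_rotate)
qed

lemma linext_divw_rev_poly:
  assumes "finpoly g"
  shows "linext divw (rev_poly g) = - rev_poly (linext divw g)"
  using assms by (simp add: linext_rev_poly divw_rev linext_fun_uminus rev_poly_linext)

section \<open>Words with at most two letters x\<close>

lemma length_eq_count_list: "length w = count_list w X + count_list w Y"
proof (induction w)
  case (Cons a w)
  then show ?case
    by (cases a) auto
qed simp

lemma count_list_X_0_replicate: "count_list u X = 0 \<Longrightarrow> u = replicate (length u) Y"
  by (metis count_list_0_iff letter.exhaust replicate_length_same)

lemma split_list_count_list_Suc: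
  assumes "count_list w a = Suc k"
  obtains u r where "w = u @ a # r" "count_list u a = 0" "count_list r a = k"
proof -
  have "a \<in> set w"
    using assms by (metis count_list_0_iff nat.distinct(1))
  then obtain u r where "w = u @ a # r" "a \<notin> set u"
    by (meson split_list_first)
  with assms that show ?thesis
    by (simp add: count_list_0_iff)
qed

lemma rev_count_list_X_0: "count_list u X = 0 \<Longrightarrow> rev u = u"
  by (metis count_list_X_0_replicate rev_replicate)

lemma append_commute_count_list_X_0:
  "count_list u X = 0 \<Longrightarrow> count_list v X = 0 \<Longrightarrow> u @ v = v @ u"
  by (metis count_list_X_0_replicate replicate_add add.commute)

lemma comspan_diff_trans:
  "p - r \<in> comspan \<Longrightarrow> q - r \<in> comspan \<Longrightarrow> p - q \<in> comspan"
  using comspan_diff[of "p - r" "q - r"] by simp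

lemma mono_minus_rev_comspan:
  assumes "count_list w X \<le> 2"
  shows "mono w - mono (rev w) \<in> comspan"
proof -
  consider "count_list w X = 0" | "count_list w X = Suc 0" | "count_list w X = Suc (Suc 0)"
    using assms by linarith
  then show ?thesis
  proof cases
    case 1
    then show ?thesis
      using cs_zero by (simp add: rev_count_list_X_0)
  next
    case 2
    then obtain u1 u2 where w: "w = u1 @ X # u2" "count_list u1 X = 0" "count_list u2 X = 0"
      by (rule split_list_count_list_Suc)
    have "mono w - mono (X # u2 @ u1) \<in> comspan"
      using comspan_mono_swap[of u1 "X # u2"] w(1) by simp
    moreover have "mono (rev w) - mono (X # u2 @ u1) \<in> comspan"
      using comspan_mono_swap[of u2 "X # u1"] w
      by (simp add: rev_count_list_X_0 append_commute_count_list_X_0[of u1 u2])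
    ultimately show ?thesis
      by (rule comspan_diff_trans)
  next
    case 3
    then obtain u1 r where w: "w = u1 @ X # r" "count_list u1 X = 0" "count_list r X = Suc 0"
      by (rule split_list_count_list_Suc)
    from w(3) obtain u2 u3 where r: "r = u2 @ X # u3" "count_list u2 X = 0" "count_list u3 X = 0"
      by (rule split_list_count_list_Suc)
    have "mono w - mono (X # u2 @ X # u3 @ u1) \<in> comspan"
      using comspan_mono_swap[of u1 "X # u2 @ X # u3"] w(1) r(1) by simp
    moreover have "mono (rev w) - mono (X # u2 @ X # u3 @ u1) \<in> comspan"
      using comspan_mono_swap[of u3 "X # u2 @ X # u1"] w r
      by (simp add: rev_count_list_X_0 append_commute_count_list_X_0[of u1 u3])
    ultimately show ?thesis
      by (rule comspan_diff_trans)
  qed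
qed

lemma comspan_minus_rev_poly:
  assumes "finpoly h" "\<And>w. w \<in> supp h \<Longrightarrow> count_list w X \<le> 2"
  shows "h - rev_poly h \<in> comspan"
proof -
  have "h - rev_poly h = linext (\<lambda>v. mono v - mono (rev v)) h"
    using assms(1) by (simp add: linext_fun_diff linext_mono_self rev_poly_eq_linext)
  also have "\<dots> \<in> comspan"
    unfolding linext_def using assms(2)
    by (intro comspan_sum cs_scl mono_minus_rev_comspan)
  finally show ?thesis .
qed

lemma comspan_if_rev_poly_eq_uminus:
  assumes "finpoly h" "\<And>w. w \<in> supp h \<Longrightarrow> count_list w X \<le> 2" "rev_poly h = - h"
  shows "h \<in> comspan"
proof -
  have "scl (1/2) (h - rev_poly h) = h"
    using assms(3) by (simp add: fun_eq_iff)
  then show ?thesis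
    using cs_scl[OF comspan_minus_rev_poly[OF assms(1,2)]] by metis
qed

theorem mainTheorem16:
  fixes g :: ncpoly and i j :: nat
  assumes "finpoly g"
    and "homog g i j"
    and "tr g \<in> FL"
    and "even (i + j)"
    and "i \<le> 3"
  shows "divergence (uGamma g) = tr 0"
proof -
  define h where "h = linext divw g"
  have "even (length w)" if "g w \<noteq> 0" for w
    using assms(2,4) that length_eq_count_list[of w] by (simp add: homog_def)
  then have "rev_poly g - g \<in> comspan"
    using antipode_minus_self_comspan_FL[OF assms(1,3)] by (simp add: antipode_eq_rev_poly_if_even)
  then have "linext divw (rev_poly g - g) = 0"
    by (rule linext_comspan[where F = divw, OF divw_append_swap])
  then have "linext divw (rev_poly g) = h"
    using assms(1) by (simp add: h_def linext_diff finpoly_rev_poly)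
  then have "rev_poly h = - h"
    using linext_divw_rev_poly[OF assms(1)] unfolding h_def by (metis minus_minus)
  moreover have "count_list w X \<le> 2" if "w \<in> supp h" for w
    using that supp_linext count_supp_divw assms(2,5)
    unfolding h_def homog_def supp_def by fastforce
  moreover have "finpoly h"
    unfolding h_def using assms(1) by (intro finpoly_linext finpoly_divw)
  ultimately have "h \<in> comspan"
    using comspan_if_rev_poly_eq_uminus by blast
  then show ?thesis
    using divergence_uGamma[OF assms(1)] tr_comspan by (simp add: h_def)
qed

end
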